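(* Let $I_1>0$, $\delta\in\mathbb{R}$ and let $V:\mathbb{R}\to\mathbb{R}$ be smooth (in the paper $V(s)=c_1s+c_2s^2$). On $\mathbb{R}^4\times\mathbb{R}^3\ni(\bm{x},\bm{l})$ with the Poisson structure $B_+$ (defined in the context), consider \[ H=\frac{1}{2I_1}\big(l_x^2+l_y^2+l_z^2+\delta L_3^2\big)+V(x_0^2+x_3^2-x_1^2-x_2^2), \] \[ L_3=2l_x(-x_0x_2+x_1x_3)+2l_y(x_0x_1+x_2x_3)+l_z(x_0^2+x_3^2-x_1^2-x_2^2), \] and $l_z$. Then: (i) the functions $H$, $l_z$, $L_3$ pairwise Poisson commute with respect to $B_+$; (ii) the Hamiltonian vector field of $H$ satisfies \[ X_H=\frac{1}{2I_1}X_{\bm{l}^2}+\frac{\delta L_3}{I_1}X_{L_3}-\frac12\big(0,0,0,0,\ \bm{x}_+\nabla_{\bm{x}}V\big)^t, \] where $\bm{l}^2=l_x^2+l_y^2+l_z^2$ and $\nabla_{\bm{x}}V$ denotes the gradient with respect to $\bm{x}$ of $\bm{x}\mapsto V(x_0^2+x_3^2-x_1^2-x_2^2)$; (iii) the flows of $X_{l_z}$ and $X_{L_3}$ are periodic and commute, so they generate a (singular) $T^2$-action; (iv) restricted to $M=\{(\bm{x},\bm{l}):|\bm{x}|=1\}$, the vector fields $X_H$, $X_{L_3}$, $X_{l_z}$ are linearly independent on an open dense subset of $M$.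
   Context: For $\bm{x}=(x_0,x_1,x_2,x_3)\in\mathbb{R}^4$ define the $3\times4$ matrices \[ \bm{x}_\pm=\begin{pmatrix} x_1 & -x_0 & \mp x_3 & \pm x_2\\ x_2 & \pm x_3 & -x_0 & \mp x_1\\ x_3 & \mp x_2 & \pm x_1 & -x_0\end{pmatrix}. \] For $\bm{v}\in\mathbb{R}^3$ let $\hat{\bm{v}}$ be the $3\times 3$ skew matrix with $\hat{\bm{v}}\bm{u}=\bm{v}\times\bm{u}$. The Poisson structure $B_+$ on $\mathbb{R}^4\times\mathbb{R}^3$ is given by the $7\times7$ matrix \[ B_+=\begin{pmatrix}0 & \tfrac12\bm{x}_+^t\\ -\tfrac12\bm{x}_+ & -\hat{\bm{l}}\end{pmatrix}, \] i.e. $\{F,G\}=\nabla F^t B_+\nabla G$, and the Hamiltonian vector field of $F$ is $X_F=B_+\nabla F$, so that $\dot{\bm{x}}=\tfrac12\bm{x}_+^t\nabla_{\bm{l}}F$, $\dot{\bm{l}}=-\tfrac12\bm{x}_+\nabla_{\bm{x}}F-\bm{l}\times\nabla_{\bm{l}}F$. The function $|\bm{x}|^2$ is a Casimir. On $|\bm{x}|=1$, $R=\bm{x}_+\bm{x}_-^t\in SO(3)$ and $L_3=\bm{l}\cdot R\bm{e}_3$ with $\bm{e}_3=(0,0,1)^t$. *)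

theory Defs
  imports "HOL-Analysis.Analysis"
begin

text \<open>Phase space R^4 x R^3. A point is z = (x, l) with x = (x$0, x$1, x$2, x$3)
  and l = (l$1, l$2, l$3) = (l_x, l_y, l_z).\<close>

type_synonym state = "(real^4) \<times> (real^3)"

definition vec4 :: "real \<Rightarrow> real \<Rightarrow> real \<Rightarrow> real \<Rightarrow> real^4" where
  "vec4 a b c d = (\<chi> j. if j = 0 then a else if j = 1 then b else if j = 2 then c else d)"

definition vec3 :: "'a \<Rightarrow> 'a \<Rightarrow> 'a \<Rightarrow> 'a^3" where
  "vec3 a b c = (\<chi> i. if i = 1 then a else if i = 2 then b else c)"

definition xplus :: "real^4 \<Rightarrow> real^4^3" where
  "xplus x = vec3 (vec4 (x$1) (-(x$0)) (-(x$3)) (x$2))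
                  (vec4 (x$2) (x$3) (-(x$0)) (-(x$1)))
                  (vec4 (x$3) (-(x$2)) (x$1) (-(x$0)))"

definition xminus :: "real^4 \<Rightarrow> real^4^3" where
  "xminus x = vec3 (vec4 (x$1) (-(x$0)) (x$3) (-(x$2)))
                   (vec4 (x$2) (-(x$3)) (-(x$0)) (x$1))
                   (vec4 (x$3) (x$2) (-(x$1)) (-(x$0)))"

definition grad :: "(state \<Rightarrow> real) \<Rightarrow> state \<Rightarrow> state" where
  "grad F z = ((\<chi> i. frechet_derivative F (at z) (axis i 1, 0)),
               (\<chi> j. frechet_derivative F (at z) (0, axis j 1)))"

text \<open>Hamiltonian vector field X_F = B_+ grad F.\<close>
definition hvf :: "(state \<Rightarrow> real) \<Rightarrow> state \<Rightarrow> state" where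
  "hvf F z = ((1/2) *\<^sub>R (transpose (xplus (fst z)) *v snd (grad F z)),
              - ((1/2) *\<^sub>R (xplus (fst z) *v fst (grad F z))) - cross3 (snd z) (snd (grad F z)))"

definition poisson :: "(state \<Rightarrow> real) \<Rightarrow> (state \<Rightarrow> real) \<Rightarrow> state \<Rightarrow> real" where
  "poisson F G z = grad F z \<bullet> hvf G z"

definition quadq :: "real^4 \<Rightarrow> real" where
  "quadq x = (x$0)^2 + (x$3)^2 - (x$1)^2 - (x$2)^2"

definition L3 :: "state \<Rightarrow> real" where
  "L3 z = (let x = fst z; l = snd z in
      2 * l$1 * (-(x$0) * x$2 + x$1 * x$3) + 2 * l$2 * (x$0 * x$1 + x$2 * x$3)
      + l$3 * quadq x)"

definition lz :: "state \<Rightarrow> real" where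
  "lz z = snd z $ 3"

definition lsq :: "state \<Rightarrow> real" where
  "lsq z = (snd z $ 1)^2 + (snd z $ 2)^2 + (snd z $ 3)^2"

definition Ham :: "real \<Rightarrow> real \<Rightarrow> (real \<Rightarrow> real) \<Rightarrow> state \<Rightarrow> real" where
  "Ham I1 \<delta> V z = 1 / (2 * I1) * (lsq z + \<delta> * (L3 z)^2) + V (quadq (fst z))"

definition is_flow :: "(state \<Rightarrow> state) \<Rightarrow> (real \<Rightarrow> state \<Rightarrow> state) \<Rightarrow> bool" where
  "is_flow X \<phi> \<longleftrightarrow> (\<forall>z. \<phi> 0 z = z \<and>
      (\<forall>t. ((\<lambda>s. \<phi> s z) has_vector_derivative X (\<phi> t z)) (at t)))"

definition Mset :: "state set" where
  "Mset = {z. norm (fst z) = 1}"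

definition smooth_real :: "(real \<Rightarrow> real) \<Rightarrow> bool" where
  "smooth_real V \<longleftrightarrow> (\<forall>n s. ((deriv ^^ n) V) differentiable (at s))"

end

theory Submission
  imports Defs
begin

text \<open>
  Everything follows from explicit formulas for the Hamiltonian vector fields. With the commuting
  complex structures Jx, Kx of R^4, X_lz rotates x by Kx at speed 1/2 and l about e_3, while
  X_L3 = (|x|^2/2 Jx x, 0); so both flows are rotations, of period 4 pi on |x| = 1, and they commute.
  H is built from lsq, L3 and quadq, each invariant under both rotations, hence the brackets vanish.
  For independence, apply x_+ to the x-component of a X_H + b X_L3 + c X_lz: since
  x_+ x_+^t = |x|^2, x_+ Jx x = R e_3 and x_+ Kx x = |x|^2 e_3, this gives a linear relation between
  l, R e_3 and e_3, which are independent where (R e_3 \<times> l)_3 \<noteq> 0. That set is open, and dense in M: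
  first perturb l, and if R e_3 = \<plusminus>e_3 first rotate x slightly to tilt R e_3.
\<close>

lemma numeral_4_eq_0: "(4::4) = 0"
  by simp

lemma forall_4_UNIV: "(\<forall>i::4. P i) \<longleftrightarrow> P 0 \<and> P 1 \<and> P 2 \<and> P 3"
  using forall_4[of P] by (auto simp add: numeral_4_eq_0)

lemma sum_4_UNIV: "sum f (UNIV::4 set) = f 0 + f 1 + f 2 + f 3"
  using sum_4[of f] by (simp add: numeral_4_eq_0 algebra_simps)

lemma vec4_nth [simp]:
  "vec4 a b c d $ 0 = a" "vec4 a b c d $ 1 = b" "vec4 a b c d $ 2 = c" "vec4 a b c d $ 3 = d"
  by (simp_all add: vec4_def)

lemma vec3_nth [simp]: "vec3 a b c $ 1 = a" "vec3 a b c $ 2 = b" "vec3 a b c $ 3 = c"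
  by (simp_all add: vec3_def)

lemma vec4_eq_iff: "(v::real^4) = w \<longleftrightarrow> v$0 = w$0 \<and> v$1 = w$1 \<and> v$2 = w$2 \<and> v$3 = w$3"
  by (simp add: vec_eq_iff forall_4_UNIV)

lemma vec3_eq_iff: "(v::real^3) = w \<longleftrightarrow> v$1 = w$1 \<and> v$2 = w$2 \<and> v$3 = w$3"
  by (simp add: vec_eq_iff forall_3)

lemma inner_vec4: "(v::real^4) \<bullet> w = v$0 * w$0 + v$1 * w$1 + v$2 * w$2 + v$3 * w$3"
  by (simp add: inner_vec_def sum_4_UNIV)

lemma inner_vec3: "(v::real^3) \<bullet> w = v$1 * w$1 + v$2 * w$2 + v$3 * w$3"
  by (simp add: inner_vec_def sum_3)

lemma xplus_mult_nth [simp]: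
  "(xplus x *v u) $ 1 = x$1 * u$0 - x$0 * u$1 - x$3 * u$2 + x$2 * u$3"
  "(xplus x *v u) $ 2 = x$2 * u$0 + x$3 * u$1 - x$0 * u$2 - x$1 * u$3"
  "(xplus x *v u) $ 3 = x$3 * u$0 - x$2 * u$1 + x$1 * u$2 - x$0 * u$3"
  by (simp_all add: xplus_def matrix_vector_mult_def sum_4_UNIV)

lemma mult_xplus_nth [simp]:
  "(w v* xplus x) $ 0 = x$1 * w$1 + x$2 * w$2 + x$3 * w$3"
  "(w v* xplus x) $ 1 = - x$0 * w$1 + x$3 * w$2 - x$2 * w$3"
  "(w v* xplus x) $ 2 = - x$3 * w$1 - x$0 * w$2 + x$1 * w$3"
  "(w v* xplus x) $ 3 = x$2 * w$1 - x$1 * w$2 - x$0 * w$3"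
  by (simp_all add: xplus_def vector_matrix_mult_def sum_3)

lemma cross3_nth [simp]:
  "cross3 a b $ 1 = a$2 * b$3 - a$3 * b$2"
  "cross3 a b $ 2 = a$3 * b$1 - a$1 * b$3"
  "cross3 a b $ 3 = a$1 * b$2 - a$2 * b$1"
  by (simp_all add: cross3_def vector_def)

definition Jx :: "real^4 \<Rightarrow> real^4" where
  "Jx x = vec4 (x$3) (x$2) (- x$1) (- x$0)"

definition Kx :: "real^4 \<Rightarrow> real^4" where
  "Kx x = vec4 (x$3) (- x$2) (x$1) (- x$0)"

text \<open>Re3 x is R e_3 for R = x_+ x_-^t, since the last row of x_- is Jx x (xplus_mult_Jx);
  thus L3 z = l \<bullet> R e_3.\<close>

definition Re3 :: "real^4 \<Rightarrow> real^3" where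
  "Re3 x = vec3 (2 * (x$1 * x$3 - x$0 * x$2)) (2 * (x$0 * x$1 + x$2 * x$3)) (quadq x)"

lemma Jx_nth [simp]: "Jx x $ 0 = x$3" "Jx x $ 1 = x$2" "Jx x $ 2 = - x$1" "Jx x $ 3 = - x$0"
  by (simp_all add: Jx_def)

lemma Kx_nth [simp]: "Kx x $ 0 = x$3" "Kx x $ 1 = - x$2" "Kx x $ 2 = x$1" "Kx x $ 3 = - x$0"
  by (simp_all add: Kx_def)

lemma xplus_mult_Jx: "xplus x *v Jx x = Re3 x"
  by (simp add: vec3_eq_iff Re3_def quadq_def power2_eq_square algebra_simps)

lemma xplus_mult_Kx: "xplus x *v Kx x = (x \<bullet> x) *\<^sub>R vec3 0 0 1"
  by (simp add: vec3_eq_iff inner_vec4 algebra_simps)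

lemma xplus_mult_transpose: "xplus x *v (w v* xplus x) = (x \<bullet> x) *\<^sub>R w"
  by (simp add: vec3_eq_iff inner_vec4 algebra_simps)

lemma Re3_mult_xplus: "Re3 x v* xplus x = (x \<bullet> x) *\<^sub>R Jx x"
  by (simp add: vec4_eq_iff Re3_def quadq_def inner_vec4 power2_eq_square algebra_simps)

lemma grad_eqI:
  assumes "(F has_derivative (\<lambda>h. g \<bullet> h)) (at z)"
  shows "grad F z = g"
  using frechet_derivative_at[OF assms, symmetric]
  by (simp add: grad_def vec_eq_iff inner_axis inner_Pair_0 prod_eq_iff)

lemma has_derivative_fst_nth: "((\<lambda>w::state. fst w $ i) has_derivative (\<lambda>h. fst h $ i)) F"
  by (intro bounded_linear_imp_has_derivative bounded_linear_compose[OF bounded_linear_vec_nth]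
      bounded_linear_fst)

lemma has_derivative_snd_nth: "((\<lambda>w::state. snd w $ i) has_derivative (\<lambda>h. snd h $ i)) F"
  by (intro bounded_linear_imp_has_derivative bounded_linear_compose[OF bounded_linear_vec_nth]
      bounded_linear_snd)

lemmas has_derivative_coordinates =
  has_derivative_fst_nth has_derivative_snd_nth has_derivative_add has_derivative_diff
  has_derivative_mult has_derivative_minus has_derivative_power has_derivative_const

definition grad_quadq :: "real^4 \<Rightarrow> real^4" where
  "grad_quadq x = vec4 (2 * x$0) (- 2 * x$1) (- 2 * x$2) (2 * x$3)"

definition grad_x_L3 :: "real^4 \<Rightarrow> real^3 \<Rightarrow> real^4" where
  "grad_x_L3 x l =
     vec4 (- 2 * l$1 * x$2 + 2 * l$2 * x$1 + 2 * l$3 * x$0)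
          (2 * l$1 * x$3 + 2 * l$2 * x$0 - 2 * l$3 * x$1)
          (- 2 * l$1 * x$0 + 2 * l$2 * x$3 - 2 * l$3 * x$2)
          (2 * l$1 * x$1 + 2 * l$2 * x$2 + 2 * l$3 * x$3)"

lemma has_derivative_lz: "(lz has_derivative (\<lambda>h. (0, vec3 0 0 1) \<bullet> h)) (at z)"
  unfolding lz_def
  by (rule has_derivative_eq_rhs[OF has_derivative_snd_nth]) (simp add: fun_eq_iff inner_vec3)

lemma has_derivative_lsq: "(lsq has_derivative (\<lambda>h. (0, 2 *\<^sub>R snd z) \<bullet> h)) (at z)"
  unfolding lsq_def
  by (rule has_derivative_eq_rhs, (rule has_derivative_coordinates)+)
     (simp add: fun_eq_iff inner_vec3 algebra_simps)

lemma has_derivative_quadq: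
  "((\<lambda>w::state. quadq (fst w)) has_derivative (\<lambda>h. (grad_quadq (fst z), 0) \<bullet> h)) (at z)"
  unfolding quadq_def
  by (rule has_derivative_eq_rhs, (rule has_derivative_coordinates)+)
     (simp add: fun_eq_iff inner_vec4 grad_quadq_def)

lemma has_derivative_L3:
  "(L3 has_derivative (\<lambda>h. (grad_x_L3 (fst z) (snd z), Re3 (fst z)) \<bullet> h)) (at z)"
  unfolding L3_def quadq_def Let_def
  by (rule has_derivative_eq_rhs, (rule has_derivative_coordinates)+)
     (rule ext, simp add: inner_prod_def inner_vec4 inner_vec3 grad_x_L3_def Re3_def quadq_def,
      algebra)

lemma has_derivative_V_quadq:
  assumes "V differentiable (at (quadq (fst z)))"
  shows "((\<lambda>w::state. V (quadq (fst w))) has_derivative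
           (\<lambda>h. (deriv V (quadq (fst z)) *\<^sub>R (grad_quadq (fst z), 0)) \<bullet> h)) (at z)"
proof -
  have "(V has_derivative (\<lambda>s. deriv V (quadq (fst z)) * s)) (at (quadq (fst z)))"
    using assms by (simp add: DERIV_deriv_iff_real_differentiable[symmetric] has_field_derivative_def)
  from has_derivative_compose[OF has_derivative_quadq this] show ?thesis
    by (rule has_derivative_eq_rhs) (simp add: fun_eq_iff)
qed

lemma grad_lz: "grad lz z = (0, vec3 0 0 1)"
  by (rule grad_eqI[OF has_derivative_lz])

lemma grad_lsq: "grad lsq z = (0, 2 *\<^sub>R snd z)"
  by (rule grad_eqI[OF has_derivative_lsq])

lemma grad_quadq: "grad (\<lambda>w::state. quadq (fst w)) z = (grad_quadq (fst z), 0)"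
  by (rule grad_eqI[OF has_derivative_quadq])

lemma grad_L3: "grad L3 z = (grad_x_L3 (fst z) (snd z), Re3 (fst z))"
  by (rule grad_eqI[OF has_derivative_L3])

lemma grad_V_quadq:
  "V differentiable (at (quadq (fst z))) \<Longrightarrow>
   grad (\<lambda>w::state. V (quadq (fst w))) z = deriv V (quadq (fst z)) *\<^sub>R grad (\<lambda>w. quadq (fst w)) z"
  by (simp add: grad_quadq grad_eqI[OF has_derivative_V_quadq])

lemma grad_Ham:
  assumes "V differentiable (at (quadq (fst z)))"
  shows "grad (Ham I1 \<delta> V) z = (1 / (2 * I1)) *\<^sub>R grad lsq z + (\<delta> * L3 z / I1) *\<^sub>R grad L3 z
                                + grad (\<lambda>w. V (quadq (fst w))) z"
proof (rule grad_eqI)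
  show "(Ham I1 \<delta> V has_derivative (\<lambda>h. ((1 / (2 * I1)) *\<^sub>R grad lsq z
          + (\<delta> * L3 z / I1) *\<^sub>R grad L3 z + grad (\<lambda>w. V (quadq (fst w))) z) \<bullet> h)) (at z)"
    unfolding Ham_def[abs_def] grad_lsq grad_L3 grad_V_quadq[OF assms] grad_quadq
    by (rule has_derivative_eq_rhs,
        (rule has_derivative_add has_derivative_mult has_derivative_power has_derivative_const
          has_derivative_lsq has_derivative_L3 has_derivative_V_quadq[OF assms])+)
       (simp add: fun_eq_iff inner_add_left add_divide_distrib distrib_left distrib_right mult_ac)
qed

definition Bplus :: "state \<Rightarrow> state \<Rightarrow> state" where
  "Bplus z g = ((1/2) *\<^sub>R (transpose (xplus (fst z)) *v snd g),
                - ((1/2) *\<^sub>R (xplus (fst z) *v fst g)) - cross3 (snd z) (snd g))"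

lemma hvf_eq_Bplus: "hvf F z = Bplus z (grad F z)"
  by (simp add: hvf_def Bplus_def)

lemma linear_Bplus: "linear (Bplus z)"
  by (rule linearI) (simp_all add: Bplus_def prod_eq_iff vec3_eq_iff vec4_eq_iff algebra_simps)

lemma inner_Bplus_self: "g \<bullet> Bplus z g = 0"
  by (simp add: Bplus_def inner_prod_def inner_vec4 inner_vec3 algebra_simps)

lemma poisson_self: "poisson F F z = 0"
  by (simp add: poisson_def hvf_eq_Bplus inner_Bplus_self)

lemma hvf_lz: "hvf lz z = ((1/2) *\<^sub>R Kx (fst z), cross3 (vec3 0 0 1) (snd z))"
  by (simp add: hvf_def grad_lz vec4_eq_iff vec3_eq_iff)

lemma hvf_lsq: "hvf lsq z = (snd z v* xplus (fst z), 0)"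
  by (simp add: hvf_def grad_lsq vec4_eq_iff vec3_eq_iff)

lemma hvf_L3: "hvf L3 z = (((fst z \<bullet> fst z) / 2) *\<^sub>R Jx (fst z), 0)"
proof -
  have "- ((1/2) *\<^sub>R (xplus (fst z) *v grad_x_L3 (fst z) (snd z)))
          - cross3 (snd z) (Re3 (fst z)) = 0"
    by (simp add: vec3_eq_iff grad_x_L3_def Re3_def quadq_def power2_eq_square algebra_simps)
  then show ?thesis
    by (simp add: hvf_def grad_L3 Re3_mult_xplus)
qed

lemma hvf_Ham:
  assumes "V differentiable (at (quadq (fst z)))"
  shows "hvf (Ham I1 \<delta> V) z = (1 / (2 * I1)) *\<^sub>R hvf lsq z + (\<delta> * L3 z / I1) *\<^sub>R hvf L3 z
           - (1/2) *\<^sub>R (0, xplus (fst z) *v fst (grad (\<lambda>w. V (quadq (fst w))) z))"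
proof -
  have "hvf (\<lambda>w. V (quadq (fst w))) z
          = - (1/2) *\<^sub>R (0, xplus (fst z) *v fst (grad (\<lambda>w. V (quadq (fst w))) z))"
    by (simp add: hvf_def grad_V_quadq[OF assms] grad_quadq)
  then show ?thesis
    by (simp add: hvf_eq_Bplus grad_Ham[OF assms] linear_add[OF linear_Bplus]
        linear_scale[OF linear_Bplus])
qed

lemma poisson_Ham:
  assumes "V differentiable (at (quadq (fst z)))"
  shows "poisson (Ham I1 \<delta> V) G z = (1 / (2 * I1)) * poisson lsq G z + (\<delta> * L3 z / I1) * poisson L3 G z
           + deriv V (quadq (fst z)) * poisson (\<lambda>w. quadq (fst w)) G z"
  by (simp add: poisson_def grad_Ham[OF assms] grad_V_quadq[OF assms] inner_add_left)

lemma poisson_lsq_lz: "poisson lsq lz z = 0"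
  by (simp add: poisson_def grad_lsq hvf_lz inner_vec3 algebra_simps)

lemma poisson_L3_lz: "poisson L3 lz z = 0"
  by (simp add: poisson_def grad_L3 hvf_lz inner_vec4 inner_vec3 grad_x_L3_def Re3_def quadq_def
      algebra_simps)

lemma grad_quadq_inner_Kx: "grad_quadq x \<bullet> Kx x = 0"
  by (simp add: grad_quadq_def inner_vec4)

lemma grad_quadq_inner_Jx: "grad_quadq x \<bullet> Jx x = 0"
  by (simp add: grad_quadq_def inner_vec4)

lemma poisson_quadq_lz: "poisson (\<lambda>w. quadq (fst w)) lz z = 0"
  by (simp add: poisson_def grad_quadq hvf_lz grad_quadq_inner_Kx)

lemma poisson_lsq_L3: "poisson lsq L3 z = 0"
  by (simp add: poisson_def grad_lsq hvf_L3)

lemma poisson_quadq_L3: "poisson (\<lambda>w. quadq (fst w)) L3 z = 0"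
  by (simp add: poisson_def grad_quadq hvf_L3 grad_quadq_inner_Jx)

lemma poisson_lz_L3: "poisson lz L3 z = 0"
  by (simp add: poisson_def grad_lz hvf_L3)

lemma poisson_Ham_lz: "V differentiable (at (quadq (fst z))) \<Longrightarrow> poisson (Ham I1 \<delta> V) lz z = 0"
  by (simp add: poisson_Ham poisson_lsq_lz poisson_L3_lz poisson_quadq_lz)

lemma poisson_Ham_L3: "V differentiable (at (quadq (fst z))) \<Longrightarrow> poisson (Ham I1 \<delta> V) L3 z = 0"
  by (simp add: poisson_Ham poisson_lsq_L3 poisson_self poisson_quadq_L3)

lemma rotation_has_vector_derivative:
  fixes u v :: "'a::real_normed_vector"
  shows "((\<lambda>s. cos (\<omega> * s) *\<^sub>R u + sin (\<omega> * s) *\<^sub>R v) has_vector_derivative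
           \<omega> *\<^sub>R (cos (\<omega> * t) *\<^sub>R v - sin (\<omega> * t) *\<^sub>R u)) (at t)"
proof -
  have "((\<lambda>s. cos (\<omega> * s)) has_real_derivative - sin (\<omega> * t) * \<omega>) (at t)"
       "((\<lambda>s. sin (\<omega> * s)) has_real_derivative cos (\<omega> * t) * \<omega>) (at t)"
    by (auto intro!: derivative_eq_intros)
  from has_vector_derivative_add[OF has_vector_derivative_scaleR[OF this(1) has_vector_derivative_const]
      has_vector_derivative_scaleR[OF this(2) has_vector_derivative_const]]
  show ?thesis
    by (rule has_vector_derivative_eq_rhs) (simp add: algebra_simps)
qed

lemma Jx_Jx: "Jx (Jx x) = - x"
  by (simp add: vec4_eq_iff)

lemma Jx_Kx_commute: "Jx (Kx x) = Kx (Jx x)"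
  by (simp add: vec4_eq_iff)

lemma linear_Kx: "linear Kx"
  by (rule linearI) (simp_all add: vec4_eq_iff)

lemma linear_Jx: "linear Jx"
  by (rule linearI) (simp_all add: vec4_eq_iff)

lemma inner_rotation_Kx:
  "(c *\<^sub>R x + s *\<^sub>R Kx x) \<bullet> (c *\<^sub>R x + s *\<^sub>R Kx x) = (c\<^sup>2 + s\<^sup>2) * (x \<bullet> x)"
  by (simp add: inner_vec4 power2_eq_square algebra_simps)

lemma inner_rotation_Jx:
  "(c *\<^sub>R x + s *\<^sub>R Jx x) \<bullet> (c *\<^sub>R x + s *\<^sub>R Jx x) = (c\<^sup>2 + s\<^sup>2) * (x \<bullet> x)"
  by (simp add: inner_vec4 power2_eq_square algebra_simps)

definition lz_flow :: "real \<Rightarrow> state \<Rightarrow> state" where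
  "lz_flow s z = (cos (s / 2) *\<^sub>R fst z + sin (s / 2) *\<^sub>R Kx (fst z),
                  cos s *\<^sub>R vec3 (snd z $ 1) (snd z $ 2) 0 + sin s *\<^sub>R vec3 (- snd z $ 2) (snd z $ 1) 0
                  + vec3 0 0 (snd z $ 3))"

definition L3_flow :: "real \<Rightarrow> state \<Rightarrow> state" where
  "L3_flow t z = (cos ((fst z \<bullet> fst z) / 2 * t) *\<^sub>R fst z + sin ((fst z \<bullet> fst z) / 2 * t) *\<^sub>R Jx (fst z),
                  snd z)"

lemma is_flow_lz_flow: "is_flow (hvf lz) lz_flow"
  unfolding is_flow_def
proof (intro allI conjI)
  fix z :: state and t :: real
  show "lz_flow 0 z = z"
    by (simp add: lz_flow_def prod_eq_iff vec3_eq_iff)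
  have "((\<lambda>s. lz_flow s z) has_vector_derivative
          ((1/2) *\<^sub>R (cos (t/2) *\<^sub>R Kx (fst z) - sin (t/2) *\<^sub>R fst z),
           cos t *\<^sub>R vec3 (- snd z $ 2) (snd z $ 1) 0 - sin t *\<^sub>R vec3 (snd z $ 1) (snd z $ 2) 0)) (at t)"
    unfolding lz_flow_def
    using rotation_has_vector_derivative[of "1/2" "fst z" "Kx (fst z)" t]
      rotation_has_vector_derivative[of 1 "vec3 (snd z $ 1) (snd z $ 2) 0" "vec3 (- snd z $ 2) (snd z $ 1) 0" t]
    by (auto intro!: has_vector_derivative_Pair simp: has_vector_derivative_add_const)
  then show "((\<lambda>s. lz_flow s z) has_vector_derivative hvf lz (lz_flow t z)) (at t)"
    by (rule has_vector_derivative_eq_rhs)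
       (simp add: hvf_lz lz_flow_def prod_eq_iff vec4_eq_iff vec3_eq_iff algebra_simps)
qed

lemma inner_fst_L3_flow: "fst (L3_flow t z) \<bullet> fst (L3_flow t z) = fst z \<bullet> fst z"
  by (simp add: L3_flow_def inner_rotation_Jx)

lemma inner_fst_lz_flow: "fst (lz_flow s z) \<bullet> fst (lz_flow s z) = fst z \<bullet> fst z"
  by (simp add: lz_flow_def inner_rotation_Kx)

lemma is_flow_L3_flow: "is_flow (hvf L3) L3_flow"
  unfolding is_flow_def
proof (intro allI conjI)
  fix z :: state and t :: real
  show "L3_flow 0 z = z"
    by (simp add: L3_flow_def)
  define \<omega> where "\<omega> = (fst z \<bullet> fst z) / 2"
  have "((\<lambda>s. L3_flow s z) has_vector_derivative
          (\<omega> *\<^sub>R (cos (\<omega> * t) *\<^sub>R Jx (fst z) - sin (\<omega> * t) *\<^sub>R fst z), 0)) (at t)"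
    unfolding L3_flow_def \<omega>_def[symmetric]
    by (intro has_vector_derivative_Pair rotation_has_vector_derivative has_vector_derivative_const)
  moreover have "hvf L3 (L3_flow t z) = (\<omega> *\<^sub>R Jx (fst (L3_flow t z)), 0)"
    by (simp add: hvf_L3 inner_fst_L3_flow \<omega>_def)
  ultimately show "((\<lambda>s. L3_flow s z) has_vector_derivative hvf L3 (L3_flow t z)) (at t)"
    by (simp add: L3_flow_def \<omega>_def[symmetric] linear_add[OF linear_Jx] linear_scale[OF linear_Jx]
        Jx_Jx algebra_simps)
qed

lemma lz_flow_L3_flow_commute: "lz_flow s (L3_flow t z) = L3_flow t (lz_flow s z)"
proof -
  have "L3_flow t (lz_flow s z) =
          (cos ((fst z \<bullet> fst z) / 2 * t) *\<^sub>R fst (lz_flow s z)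
             + sin ((fst z \<bullet> fst z) / 2 * t) *\<^sub>R Jx (fst (lz_flow s z)), snd (lz_flow s z))"
    by (simp only: L3_flow_def inner_fst_lz_flow)
  then show ?thesis
    by (simp add: lz_flow_def L3_flow_def linear_add[OF linear_Jx] linear_scale[OF linear_Jx]
        linear_add[OF linear_Kx] linear_scale[OF linear_Kx] Jx_Kx_commute algebra_simps)
qed

lemma lz_flow_periodic: "lz_flow (t + 4 * pi) z = lz_flow t z"
proof -
  have "(t + 4 * pi) / 2 = t / 2 + 2 * pi" "t + 4 * pi = (t + 2 * pi) + 2 * pi"
    by simp_all
  then show ?thesis
    unfolding lz_flow_def by (simp only: cos_periodic sin_periodic)
qed

lemma L3_flow_periodic: "fst z \<bullet> fst z = 1 \<Longrightarrow> L3_flow (t + 4 * pi) z = L3_flow t z"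
  by (simp add: L3_flow_def add_divide_distrib)

lemma cross3_nth_3_neq_0_imp_independent:
  fixes n l :: "real^3"
  assumes "cross3 n l $ 3 \<noteq> 0" and "\<alpha> *\<^sub>R l + \<beta> *\<^sub>R n + \<gamma> *\<^sub>R vec3 0 0 1 = 0"
  shows "\<alpha> = 0 \<and> \<beta> = 0 \<and> \<gamma> = 0"
proof -
  from assms(2) have 1: "\<alpha> * l$1 + \<beta> * n$1 = 0" and 2: "\<alpha> * l$2 + \<beta> * n$2 = 0"
    and 3: "\<alpha> * l$3 + \<beta> * n$3 + \<gamma> = 0"
    by (simp_all add: vec3_eq_iff)
  have "\<alpha> * cross3 n l $ 3 = n$1 * (\<alpha> * l$2 + \<beta> * n$2) - n$2 * (\<alpha> * l$1 + \<beta> * n$1)"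
       "\<beta> * cross3 n l $ 3 = l$2 * (\<alpha> * l$1 + \<beta> * n$1) - l$1 * (\<alpha> * l$2 + \<beta> * n$2)"
    by (simp_all add: algebra_simps)
  with 1 2 have "\<alpha> * cross3 n l $ 3 = 0" "\<beta> * cross3 n l $ 3 = 0"
    by simp_all
  with assms(1) have "\<alpha> = 0" "\<beta> = 0"
    by simp_all
  with 3 show ?thesis
    by simp
qed

text \<open>Where nondeg z \<noteq> 0, the vectors l, R e_3 and e_3 are linearly independent.\<close>

definition nondeg :: "state \<Rightarrow> real" where
  "nondeg z = cross3 (Re3 (fst z)) (snd z) $ 3"

lemma xplus_mult_fst_hvf_combination:
  assumes "V differentiable (at (quadq (fst z)))" and "fst z \<bullet> fst z = 1"
  shows "xplus (fst z) *v fst (a *\<^sub>R hvf (Ham I1 \<delta> V) z + b *\<^sub>R hvf L3 z + c *\<^sub>R hvf lz z)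
           = (a / (2 * I1)) *\<^sub>R snd z + ((a * \<delta> * L3 z / I1 + b) / 2) *\<^sub>R Re3 (fst z)
             + (c / 2) *\<^sub>R vec3 0 0 1"
proof -
  have "fst (a *\<^sub>R hvf (Ham I1 \<delta> V) z + b *\<^sub>R hvf L3 z + c *\<^sub>R hvf lz z)
          = (a / (2 * I1)) *\<^sub>R (snd z v* xplus (fst z)) + ((a * \<delta> * L3 z / I1 + b) / 2) *\<^sub>R Jx (fst z)
            + (c / 2) *\<^sub>R Kx (fst z)"
    by (simp add: hvf_Ham[OF assms(1)] hvf_lsq hvf_L3 hvf_lz assms(2) add_divide_distrib
        algebra_simps)
  then show ?thesis
    by (simp add: matrix_vector_right_distrib matrix_vector_mult_scaleR xplus_mult_transpose
        xplus_mult_Jx xplus_mult_Kx assms(2))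
qed

lemma mem_Mset_iff: "z \<in> Mset \<longleftrightarrow> fst z \<bullet> fst z = 1"
  by (simp add: Mset_def norm_eq_1)

lemma hvf_linear_independent:
  assumes "V differentiable (at (quadq (fst z)))" and "I1 \<noteq> 0"
    and "z \<in> Mset" and "nondeg z \<noteq> 0"
    and "a *\<^sub>R hvf (Ham I1 \<delta> V) z + b *\<^sub>R hvf L3 z + c *\<^sub>R hvf lz z = 0"
  shows "a = 0 \<and> b = 0 \<and> c = 0"
proof -
  have "fst z \<bullet> fst z = 1"
    using assms(3) by (simp add: mem_Mset_iff)
  with xplus_mult_fst_hvf_combination[OF assms(1) this, of a I1 \<delta> b c] assms(5)
  have "(a / (2 * I1)) *\<^sub>R snd z + ((a * \<delta> * L3 z / I1 + b) / 2) *\<^sub>R Re3 (fst z)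
          + (c / 2) *\<^sub>R vec3 0 0 1 = 0"
    by simp
  from cross3_nth_3_neq_0_imp_independent[OF _ this] assms(2,4)
  show ?thesis
    by (auto simp: nondeg_def)
qed

lemma mem_closure_if_curve:
  fixes f :: "real \<Rightarrow> 'a::topological_space"
  assumes "isCont f 0" and "\<And>t. 0 < t \<Longrightarrow> t < 1 \<Longrightarrow> f t \<in> S"
  shows "f 0 \<in> closure S"
proof (rule Lim_in_closed_set[OF closed_closure])
  have "f t \<in> closure S" if "0 < t" "t < 1" for t
    using assms(2)[OF that] closure_subset by blast
  then show "\<forall>\<^sub>F t in at_right 0. f t \<in> closure S"
    unfolding eventually_at_right_field by (intro exI[of _ 1]) auto
  show "(f \<longlongrightarrow> f 0) (at_right 0)"
    using assms(1) by (simp add: isCont_def filterlim_at_split)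
qed simp

lemma closure_nondeg_neq_0:
  "{z \<in> Mset. Re3 (fst z) $ 1 \<noteq> 0 \<or> Re3 (fst z) $ 2 \<noteq> 0} \<subseteq> closure (Mset \<inter> {z. nondeg z \<noteq> 0})"
proof
  fix z assume z: "z \<in> {z \<in> Mset. Re3 (fst z) $ 1 \<noteq> 0 \<or> Re3 (fst z) $ 2 \<noteq> 0}"
  obtain x l where zxl: "z = (x, l)"
    by (cases z)
  define n where "n = Re3 x"
  have n12: "n$1 \<noteq> 0 \<or> n$2 \<noteq> 0"
    using z by (simp add: zxl n_def)
  show "z \<in> closure (Mset \<inter> {z. nondeg z \<noteq> 0})"
  proof (cases "nondeg z = 0")
    case False
    with z have "z \<in> Mset \<inter> {z. nondeg z \<noteq> 0}"
      by simp
    with closure_subset show ?thesis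
      by (rule subsetD)
  next
    case True
    define f where "f t = (x, l + t *\<^sub>R vec3 (- n$2) (n$1) 0)" for t
    have "nondeg (f t) = t * ((n$1)\<^sup>2 + (n$2)\<^sup>2)" for t
      using True by (simp add: f_def zxl nondeg_def n_def power2_eq_square algebra_simps)
    then have "f t \<in> Mset \<inter> {z. nondeg z \<noteq> 0}" if "0 < t" for t
      using z n12 that by (simp add: f_def zxl Mset_def)
    moreover have "isCont f 0"
      unfolding f_def by (intro continuous_intros)
    ultimately have "f 0 \<in> closure (Mset \<inter> {z. nondeg z \<noteq> 0})"
      by (intro mem_closure_if_curve) auto
    then show ?thesis
      by (simp add: f_def zxl)
  qed
qed

definition Px :: "real^4 \<Rightarrow> real^4" where
  "Px x = vec4 (- x$1) (x$0) (x$3) (- x$2)"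

lemma inner_rotation_Px:
  "(c *\<^sub>R x + s *\<^sub>R Px x) \<bullet> (c *\<^sub>R x + s *\<^sub>R Px x) = (c\<^sup>2 + s\<^sup>2) * (x \<bullet> x)"
  by (simp add: Px_def inner_vec4 power2_eq_square algebra_simps)

lemma Re3_rotation_Px_nth_3:
  "Re3 (c *\<^sub>R x + s *\<^sub>R Px x) $ 3 = (c\<^sup>2 - s\<^sup>2) * Re3 x $ 3 - 2 * c * s * Re3 x $ 2"
  by (simp add: Px_def Re3_def quadq_def power2_eq_square algebra_simps)

lemma inner_Re3_self: "Re3 x \<bullet> Re3 x = (x \<bullet> x)\<^sup>2"
  by (simp add: Re3_def quadq_def inner_vec3 inner_vec4 power2_eq_square algebra_simps)

lemma closure_Re3_not_vertical:
  "Mset \<subseteq> closure {z \<in> Mset. Re3 (fst z) $ 1 \<noteq> 0 \<or> Re3 (fst z) $ 2 \<noteq> 0}"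
proof
  fix z assume z: "z \<in> Mset"
  obtain x l where zxl: "z = (x, l)"
    by (cases z)
  have xx: "x \<bullet> x = 1"
    using z by (simp add: zxl mem_Mset_iff)
  show "z \<in> closure {z \<in> Mset. Re3 (fst z) $ 1 \<noteq> 0 \<or> Re3 (fst z) $ 2 \<noteq> 0}"
  proof (cases "Re3 x $ 1 = 0 \<and> Re3 x $ 2 = 0")
    case False
    with z have "z \<in> {z \<in> Mset. Re3 (fst z) $ 1 \<noteq> 0 \<or> Re3 (fst z) $ 2 \<noteq> 0}"
      by (simp add: zxl)
    with closure_subset show ?thesis
      by (rule subsetD)
  next
    case True
    then have "(Re3 x $ 3)\<^sup>2 = 1"
      using inner_Re3_self[of x] by (simp add: xx inner_vec3 power2_eq_square)
    define f where "f t = (cos t *\<^sub>R x + sin t *\<^sub>R Px x, l)" for t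
    have "f t \<in> Mset \<and> (Re3 (fst (f t)) $ 1 \<noteq> 0 \<or> Re3 (fst (f t)) $ 2 \<noteq> 0)"
      if "0 < t" "t < 1" for t
    proof
      have "norm (fst (f t)) = 1"
        by (simp add: f_def norm_eq_1 inner_rotation_Px xx)
      then show "f t \<in> Mset"
        by (simp add: Mset_def)
      have "sin (2 * t) > 0"
        using that pi_gt3 by (intro sin_gt_zero) auto
      then have "(sin (2 * t))\<^sup>2 > 0"
        by simp
      with sin_cos_squared_add[of "2 * t"] have "(cos (2 * t))\<^sup>2 < 1"
        by linarith
      then have "(Re3 (fst (f t)) $ 3)\<^sup>2 < 1"
        using True \<open>(Re3 x $ 3)\<^sup>2 = 1\<close>
        by (simp add: f_def Re3_rotation_Px_nth_3 cos_double power_mult_distrib)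
      moreover have "Re3 (fst (f t)) \<bullet> Re3 (fst (f t)) = 1"
        using \<open>norm (fst (f t)) = 1\<close> by (simp add: inner_Re3_self norm_eq_1)
      ultimately show "Re3 (fst (f t)) $ 1 \<noteq> 0 \<or> Re3 (fst (f t)) $ 2 \<noteq> 0"
        by (auto simp: inner_vec3 power2_eq_square)
    qed
    moreover have "isCont f 0"
      unfolding f_def by (intro continuous_intros)
    ultimately have "f 0 \<in> closure {z \<in> Mset. Re3 (fst z) $ 1 \<noteq> 0 \<or> Re3 (fst z) $ 2 \<noteq> 0}"
      by (intro mem_closure_if_curve) auto
    then show ?thesis
      by (simp add: f_def zxl)
  qed
qed

lemma Mset_subset_closure_nondeg: "Mset \<subseteq> closure (Mset \<inter> {z. nondeg z \<noteq> 0})"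
  using closure_Re3_not_vertical closure_minimal[OF closure_nondeg_neq_0 closed_closure]
  by (rule order_trans)

lemma openin_nondeg: "openin (top_of_set Mset) (Mset \<inter> {z. nondeg z \<noteq> 0})"
proof (rule openin_open_Int)
  have "continuous_on UNIV nondeg"
    unfolding nondeg_def Re3_def quadq_def
    by (simp, intro continuous_intros)
  then show "open {z. nondeg z \<noteq> 0}"
    using open_Collect_neq[of nondeg "\<lambda>_. 0"] by simp
qed

lemma lz_flow_L3_flow_torus_action:
  "\<exists>\<phi> \<psi> T1 T2. is_flow (hvf lz) \<phi> \<and> is_flow (hvf L3) \<psi> \<and>
      (\<forall>s t z. \<phi> s (\<psi> t z) = \<psi> t (\<phi> s z)) \<and> T1 > 0 \<and> T2 > 0 \<and>
      (\<forall>t. \<forall>z\<in>Mset. \<phi> (t + T1) z = \<phi> t z \<and> \<psi> (t + T2) z = \<psi> t z)"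
  by (intro exI[of _ lz_flow] exI[of _ L3_flow] exI[of _ "4 * pi"])
     (simp add: is_flow_lz_flow is_flow_L3_flow lz_flow_L3_flow_commute lz_flow_periodic
      L3_flow_periodic mem_Mset_iff)

lemma open_dense_hvf_independent:
  assumes "\<And>s. V differentiable (at s)" and "I1 \<noteq> 0"
  shows "\<exists>U. openin (top_of_set Mset) U \<and> Mset \<subseteq> closure U \<and>
           (\<forall>z\<in>U. \<forall>a b c. a *\<^sub>R hvf (Ham I1 \<delta> V) z + b *\<^sub>R hvf L3 z + c *\<^sub>R hvf lz z = 0
                     \<longrightarrow> a = 0 \<and> b = 0 \<and> c = 0)"
proof (intro exI[of _ "Mset \<inter> {z. nondeg z \<noteq> 0}"] conjI[OF openin_nondeg]
    conjI[OF Mset_subset_closure_nondeg] ballI allI impI)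
  fix z a b c
  assume "z \<in> Mset \<inter> {z. nondeg z \<noteq> 0}"
    and "a *\<^sub>R hvf (Ham I1 \<delta> V) z + b *\<^sub>R hvf L3 z + c *\<^sub>R hvf lz z = 0"
  with assms show "a = 0 \<and> b = 0 \<and> c = 0"
    by (intro hvf_linear_independent) auto
qed

theorem theorem1:
  fixes I1 \<delta> :: real and V :: "real \<Rightarrow> real"
  assumes "I1 > 0" and "smooth_real V"
  defines "H \<equiv> Ham I1 \<delta> V"
  shows
    "(\<forall>z. poisson H lz z = 0 \<and> poisson H L3 z = 0 \<and> poisson lz L3 z = 0)
   \<and> (\<forall>z. hvf H z = (1 / (2 * I1)) *\<^sub>R hvf lsq z + (\<delta> * L3 z / I1) *\<^sub>R hvf L3 z
          - (1/2) *\<^sub>R (0, xplus (fst z) *v fst (grad (\<lambda>w. V (quadq (fst w))) z)))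
   \<and> (\<exists>\<phi> \<psi> T1 T2. is_flow (hvf lz) \<phi> \<and> is_flow (hvf L3) \<psi> \<and>
        (\<forall>s t z. \<phi> s (\<psi> t z) = \<psi> t (\<phi> s z)) \<and> T1 > 0 \<and> T2 > 0 \<and>
        (\<forall>t. \<forall>z\<in>Mset. \<phi> (t + T1) z = \<phi> t z \<and> \<psi> (t + T2) z = \<psi> t z))
   \<and> (\<exists>U. openin (top_of_set Mset) U \<and> Mset \<subseteq> closure U \<and>
        (\<forall>z\<in>U. \<forall>a b c. a *\<^sub>R hvf H z + b *\<^sub>R hvf L3 z + c *\<^sub>R hvf lz z = 0
                  \<longrightarrow> a = 0 \<and> b = 0 \<and> c = 0))"
proof -
  have diff: "V differentiable (at s)" for s
    using assms(2) unfolding smooth_real_def by (metis funpow_0)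
  show ?thesis
    unfolding H_def
    using poisson_Ham_lz[OF diff] poisson_Ham_L3[OF diff] poisson_lz_L3 hvf_Ham[OF diff]
      lz_flow_L3_flow_torus_action open_dense_hvf_independent[OF diff] assms(1)
    by auto
qed

end
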